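(* Let $k\ge 2$ and $L\ge k$ be integers, and let $z$ be a (complex) fugacity. For a boundary tuple $S=(h_1,\dots,h_k)$ with each $h_i\in\{0,1,\dots,k-1\}$, let $Z_{L,k}(z,S)$ denote the partition function of $k$-mers on the width-$k$ strip with extended right boundary $S$, as defined in the context. Suppose at least one $h_i\neq 0$. Then for every permutation $\sigma$ of $\{1,\dots,k\}$, with $S'=(h_{\sigma(1)},\dots,h_{\sigma(k)})$, we have $$Z_{L,k}(z,S)=Z_{L,k}(z,S').$$
   Context: Consider the strip of lattice sites $(i,x)$ with rows $i\in\{1,\dots,k\}$ and columns $x\in\{1,2,\dots\}$. A $k$-mer is a set of $k$ consecutive sites in a straight line, either horizontal (same row $i$, columns $x,x+1,\dots,x+k-1$) or vertical (same column $x$, all rows $1,\dots,k$). A configuration is a set of $k$-mers no two of which share a site (sites may be left empty). Given $S=(h_1,\dots,h_k)$ with $h_i\in\{0,\dots,k-1\}$, the region is $R_S=\{(i,x): 1\le i\le k,\ 1\le x\le L+h_i\}$. Here $h_i$ is the number of sites to the right of the site $(i,L)$ in row $i$ that are occupied by the horizontal $k$-mer covering $(i,L)$: if $h_i=0$, the row $i$ contains no sites beyond column $L$; if $h_i\ge1$, the configuration is required to contain the horizontal $k$-mer in row $i$ occupying columns $L+h_i-k+1,\dots,L+h_i$ (which covers $(i,L)$). $Z_{L,k}(z,S)$ is the sum, over all configurations of $k$-mers contained in $R_S$ satisfying these requirements, of $z^{N}$, where $N$ is the number of $k$-mers in the configuration. *)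

theory Defs
  imports Complex_Main "HOL-Combinatorics.Permutations"
begin

text \<open>Sites are pairs (row i, column x). Rows 1..k, columns 1,2,...\<close>

definition hmer :: "nat \<Rightarrow> nat \<Rightarrow> nat \<Rightarrow> (nat \<times> nat) set" where
  "hmer k i x = {(i, x + j) | j. j < k}"

definition vmer :: "nat \<Rightarrow> nat \<Rightarrow> (nat \<times> nat) set" where
  "vmer k x = {(i, x) | i. 1 \<le> i \<and> i \<le> k}"

definition kmers :: "nat \<Rightarrow> (nat \<times> nat) set set" where
  "kmers k = {hmer k i x | i x. 1 \<le> i \<and> i \<le> k \<and> 1 \<le> x} \<union> {vmer k x | x. 1 \<le> x}"

text \<open>Region R_S; the boundary tuple S = (h_1,...,h_k) is the function h restricted to {1..k}.\<close>
definition region :: "nat \<Rightarrow> nat \<Rightarrow> (nat \<Rightarrow> nat) \<Rightarrow> (nat \<times> nat) set" where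
  "region k L h = {(i, x). 1 \<le> i \<and> i \<le> k \<and> 1 \<le> x \<and> x \<le> L + h i}"

definition configs :: "nat \<Rightarrow> nat \<Rightarrow> (nat \<Rightarrow> nat) \<Rightarrow> (nat \<times> nat) set set set" where
  "configs k L h = {C. C \<subseteq> kmers k \<and> (\<forall>A\<in>C. A \<subseteq> region k L h) \<and> pairwise disjnt C \<and>
      (\<forall>i\<in>{1..k}. 1 \<le> h i \<longrightarrow> hmer k i (L + h i + 1 - k) \<in> C)}"

definition Zpart :: "nat \<Rightarrow> nat \<Rightarrow> complex \<Rightarrow> (nat \<Rightarrow> nat) \<Rightarrow> complex" where
  "Zpart L k z h = (\<Sum>C\<in>configs k L h. z ^ card C)"

end

theory Submission
  imports Defs
begin

text \<open>Relabelling the rows of the strip by a permutation \<open>p\<close> of \<open>{1..k}\<close> sends a horizontal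
  \<open>k\<close>-mer in row \<open>i\<close> to the one in row \<open>p i\<close> and fixes every vertical \<open>k\<close>-mer. It therefore
  maps the configurations with boundary \<open>h\<close> bijectively onto those with boundary \<open>h \<circ> inv p\<close>,
  preserving the number of \<open>k\<close>-mers. The symmetry holds for every boundary function.\<close>

lemma image_map_prod_hmer: "map_prod p id ` hmer k i x = hmer k (p i) x"
  unfolding hmer_def by force

lemma image_map_prod_vmer:
  assumes "p ` {1..k} = {1..k}"
  shows "map_prod p id ` vmer k x = vmer k x"
proof -
  have "map_prod p id ` vmer k x = (\<lambda>i. (i, x)) ` (p ` {1..k})"
    unfolding vmer_def by force
  also have "\<dots> = vmer k x"
    unfolding assms vmer_def by force
  finally show ?thesis .
qed

lemma image_map_prod_kmers:
  assumes p: "p permutes {1..k}" and A: "A \<in> kmers k"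
  shows "map_prod p id ` A \<in> kmers k"
  using A unfolding kmers_def
proof (elim UnE CollectE exE conjE)
  fix i x assume "A = hmer k i x" "1 \<le> i" "i \<le> k" "1 \<le> x"
  moreover have "p i \<in> {1..k}"
    using \<open>1 \<le> i\<close> \<open>i \<le> k\<close> permutes_in_image[OF p] by simp
  ultimately show "map_prod p id ` A \<in>
      {hmer k i x |i x. 1 \<le> i \<and> i \<le> k \<and> 1 \<le> x} \<union> {vmer k x |x. 1 \<le> x}"
    by (auto simp: image_map_prod_hmer)
next
  fix x assume "A = vmer k x" "1 \<le> x"
  then show "map_prod p id ` A \<in>
      {hmer k i x |i x. 1 \<le> i \<and> i \<le> k \<and> 1 \<le> x} \<union> {vmer k x |x. 1 \<le> x}"
    using image_map_prod_vmer[OF permutes_image[OF p]] by auto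
qed

lemma image_map_prod_region:
  assumes "p permutes {1..k}"
  shows "map_prod p id ` region k L h \<subseteq> region k L (h \<circ> inv p)"
proof
  fix s assume "s \<in> map_prod p id ` region k L h"
  then obtain i x where "s = (p i, x)" and "i \<in> {1..k}" "1 \<le> x" "x \<le> L + h i"
    unfolding region_def by auto
  moreover have "p i \<in> {1..k}"
    using \<open>i \<in> {1..k}\<close> permutes_in_image[OF assms] by blast
  ultimately show "s \<in> region k L (h \<circ> inv p)"
    unfolding region_def by (simp add: permutes_inverses(2)[OF assms])
qed

lemma pairwise_disjnt_image_image:
  assumes "inj f" and "pairwise disjnt C"
  shows "pairwise disjnt ((`) f ` C)"
  unfolding pairwise_image using assms(2)
  by (rule pairwise_mono) (auto simp: disjnt_def image_Int[OF assms(1), symmetric])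

lemma image_map_prod_configs:
  assumes p: "p permutes {1..k}" and C: "C \<in> configs k L h"
  shows "(`) (map_prod p id) ` C \<in> configs k L (h \<circ> inv p)"
proof -
  have kmers: "C \<subseteq> kmers k" and region: "\<forall>A\<in>C. A \<subseteq> region k L h"
    and disjoint: "pairwise disjnt C"
    and boundary: "\<forall>i\<in>{1..k}. 1 \<le> h i \<longrightarrow> hmer k i (L + h i + 1 - k) \<in> C"
    using C unfolding configs_def by auto
  have inj: "inj (map_prod p id)"
    using permutes_inj[OF p] by (simp add: prod.inj_map)
  show ?thesis
    unfolding configs_def mem_Collect_eq
  proof (intro conjI ballI impI)
    show "(`) (map_prod p id) ` C \<subseteq> kmers k"
      using kmers by (auto intro: image_map_prod_kmers[OF p])
    show "B \<subseteq> region k L (h \<circ> inv p)" if B: "B \<in> (`) (map_prod p id) ` C" for B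
    proof -
      obtain A where "A \<in> C" and "B = map_prod p id ` A"
        using B by blast
      then have "B \<subseteq> map_prod p id ` region k L h"
        using region by (simp add: image_mono)
      then show ?thesis
        using image_map_prod_region[OF p] by (rule order_trans)
    qed
    show "pairwise disjnt ((`) (map_prod p id) ` C)"
      using pairwise_disjnt_image_image[OF inj disjoint] .
    show "hmer k i (L + (h \<circ> inv p) i + 1 - k) \<in> (`) (map_prod p id) ` C"
      if "i \<in> {1..k}" "1 \<le> (h \<circ> inv p) i" for i
    proof -
      have "inv p i \<in> {1..k}"
        using that(1) permutes_in_image[OF permutes_inv[OF p]] by blast
      then have "hmer k (inv p i) (L + h (inv p i) + 1 - k) \<in> C"
        using boundary that(2) by simp
      then show ?thesis
        by (rule rev_image_eqI) (simp add: image_map_prod_hmer permutes_inverses(1)[OF p])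
    qed
  qed
qed

lemma bij_betw_configs_map_prod:
  assumes p: "p permutes {1..k}"
  shows "bij_betw ((`) ((`) (map_prod p id))) (configs k L h) (configs k L (h \<circ> inv p))"
proof (rule bij_betw_byWitness)
  have "map_prod (inv p) id (map_prod p id s) = s" "map_prod p id (map_prod (inv p) id s) = s"
    for s :: "nat \<times> nat"
    using permutes_inverses[OF p] by (simp_all add: map_prod_def split_beta)
  then show "\<forall>C\<in>configs k L h. (`) (map_prod (inv p) id) ` (`) (map_prod p id) ` C = C"
    "\<forall>D\<in>configs k L (h \<circ> inv p). (`) (map_prod p id) ` (`) (map_prod (inv p) id) ` D = D"
    by (simp_all add: image_image)
  show "(`) ((`) (map_prod p id)) ` configs k L h \<subseteq> configs k L (h \<circ> inv p)"
    using image_map_prod_configs[OF p] by (rule image_subsetI)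
  have "h \<circ> inv p \<circ> inv (inv p) = h"
    by (simp add: permutes_inv_inv[OF p] comp_assoc permutes_inv_o(2)[OF p])
  then have "(`) (map_prod (inv p) id) ` D \<in> configs k L h" if "D \<in> configs k L (h \<circ> inv p)" for D
    using image_map_prod_configs[OF permutes_inv[OF p] that] by simp
  then show "(`) ((`) (map_prod (inv p) id)) ` configs k L (h \<circ> inv p) \<subseteq> configs k L h"
    by (rule image_subsetI)
qed

lemma Zpart_comp_permutes:
  assumes "\<sigma> permutes {1..k}"
  shows "Zpart L k z (h \<circ> \<sigma>) = Zpart L k z h"
proof -
  let ?F = "(`) ((`) (map_prod (inv \<sigma>) id))"
  have bij: "bij_betw ?F (configs k L h) (configs k L (h \<circ> \<sigma>))"
    using bij_betw_configs_map_prod[OF permutes_inv[OF assms]]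
    unfolding permutes_inv_inv[OF assms] .
  have "inj (map_prod (inv \<sigma>) id)"
    using permutes_inj[OF permutes_inv[OF assms]] by (simp add: prod.inj_map)
  then have card: "card (?F C) = card C" for C
    by (rule card_image[OF inj_on_image[OF inj_on_subset[OF _ subset_UNIV]]])
  have "Zpart L k z (h \<circ> \<sigma>) = (\<Sum>C\<in>configs k L h. z ^ card (?F C))"
    unfolding Zpart_def by (rule sum.reindex_bij_betw[OF bij, symmetric])
  then show ?thesis
    unfolding card Zpart_def .
qed

theorem lemma1:
  fixes k L :: nat and z :: complex and h :: "nat \<Rightarrow> nat" and \<sigma> :: "nat \<Rightarrow> nat"
  assumes "k \<ge> 2" and "L \<ge> k"
    and "\<forall>i\<in>{1..k}. h i < k"
    and "\<exists>i\<in>{1..k}. h i \<noteq> 0"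
    and "\<sigma> permutes {1..k}"
  shows "Zpart L k z h = Zpart L k z (h \<circ> \<sigma>)"
  using Zpart_comp_permutes[OF assms(5)] by simp

end
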